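(* Let $n,m\in\{0,1,2,\dots\}\cup\{\infty\}$ with $n+m\neq 0$. Then there exists a closed symmetric invertible (injective) operator $A$ in a complex Hilbert space $H$ with $\overline{D(A)}=H$ and $\overline{R(A)}=H$ which has deficiency index $(n,m)$.
   Context: The deficiency index of a closed symmetric operator $A$ in $H$ is the pair $(\dim\mathcal{N}_z(A),\dim\mathcal{N}_{\overline z}(A))$ for $z\in\mathbb{C}_+$, where $\mathcal{N}_z(A)=H\ominus(A-zE_H)D(A)$. *)

theory Defs
  imports "HOL-Analysis.Analysis" "HOL-Library.Extended_Nat" "HOL-Library.Function_Algebras"
begin

text \<open>The complex Hilbert space H is realised concretely as l2(N) = square-summable
  complex sequences, with the usual inner product and norm.\<close>

type_synonym vec = "nat \<Rightarrow> complex"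

definition l2 :: "vec set" where
  "l2 = {f. summable (\<lambda>k. (cmod (f k))\<^sup>2)}"

definition l2_inner :: "vec \<Rightarrow> vec \<Rightarrow> complex" where
  "l2_inner f g = (\<Sum>k. f k * cnj (g k))"

definition l2_norm :: "vec \<Rightarrow> real" where
  "l2_norm f = sqrt (\<Sum>k. (cmod (f k))\<^sup>2)"

definition vscale :: "complex \<Rightarrow> vec \<Rightarrow> vec" where
  "vscale c f = (\<lambda>k. c * f k)"

definition l2_tendsto :: "(nat \<Rightarrow> vec) \<Rightarrow> vec \<Rightarrow> bool" where
  "l2_tendsto x l \<longleftrightarrow> ((\<lambda>j. l2_norm (x j - l)) \<longlonglongrightarrow> 0)"

definition l2_dense :: "vec set \<Rightarrow> bool" where
  "l2_dense S \<longleftrightarrow> (\<forall>x\<in>l2. \<forall>e>0. \<exists>s\<in>S. l2_norm (x - s) < e)"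

definition linear_subspace :: "vec set \<Rightarrow> bool" where
  "linear_subspace S \<longleftrightarrow> S \<subseteq> l2 \<and> 0 \<in> S \<and> (\<forall>x\<in>S. \<forall>y\<in>S. x + y \<in> S)
     \<and> (\<forall>c. \<forall>x\<in>S. vscale c x \<in> S)"

definition lin_operator :: "vec set \<Rightarrow> (vec \<Rightarrow> vec) \<Rightarrow> bool" where
  "lin_operator D A \<longleftrightarrow> linear_subspace D \<and> A ` D \<subseteq> l2
     \<and> (\<forall>x\<in>D. \<forall>y\<in>D. A (x + y) = A x + A y)
     \<and> (\<forall>c. \<forall>x\<in>D. A (vscale c x) = vscale c (A x))"

definition closed_op :: "vec set \<Rightarrow> (vec \<Rightarrow> vec) \<Rightarrow> bool" where
  "closed_op D A \<longleftrightarrow> (\<forall>x u v. (\<forall>j. x j \<in> D) \<and> u \<in> l2 \<and> v \<in> l2 \<and>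
      l2_tendsto x u \<and> l2_tendsto (\<lambda>j. A (x j)) v \<longrightarrow> u \<in> D \<and> A u = v)"

definition symmetric_op :: "vec set \<Rightarrow> (vec \<Rightarrow> vec) \<Rightarrow> bool" where
  "symmetric_op D A \<longleftrightarrow> (\<forall>x\<in>D. \<forall>y\<in>D. l2_inner (A x) y = l2_inner x (A y))"

definition orth_compl :: "vec set \<Rightarrow> vec set" where
  "orth_compl S = {h\<in>l2. \<forall>y\<in>S. l2_inner h y = 0}"

definition lin_independent :: "vec set \<Rightarrow> bool" where
  "lin_independent B \<longleftrightarrow> (\<forall>c. (\<Sum>b\<in>B. vscale (c b) b) = 0 \<longrightarrow> (\<forall>b\<in>B. c b = 0))"

definition vdim :: "vec set \<Rightarrow> enat" where
  "vdim S = Sup {enat (card B) | B. finite B \<and> B \<subseteq> S \<and> lin_independent B}"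

definition defect_space :: "vec set \<Rightarrow> (vec \<Rightarrow> vec) \<Rightarrow> complex \<Rightarrow> vec set" where
  "defect_space D A z = orth_compl ((\<lambda>x. A x - vscale z x) ` D)"

definition has_deficiency_index :: "vec set \<Rightarrow> (vec \<Rightarrow> vec) \<Rightarrow> enat \<Rightarrow> enat \<Rightarrow> bool" where
  "has_deficiency_index D A n m \<longleftrightarrow>
     (\<forall>z. Im z > 0 \<longrightarrow> vdim (defect_space D A z) = n \<and> vdim (defect_space D A (cnj z)) = m)"

end

theory Submission
  imports Defs "HOL-Library.Infinite_Set"
begin

text \<open>Let \<open>\<sigma>\<close> be a strictly increasing map of \<open>\<nat>\<close> with \<open>k < \<sigma> k\<close> and \<open>V\<close> the isometry of
  \<open>l2\<close> sending \<open>e\<^sub>k\<close> to \<open>e\<^sub>\<sigma>\<^sub>k\<close>. Then \<open>\<nat>\<close> splits into the chains \<open>c, \<sigma> c, \<sigma>\<^sup>2 c, \<dots>\<close> issuing from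
  the points \<open>c \<notin> range \<sigma>\<close>; give each chain a sign \<open>\<epsilon> = \<plusminus>1\<close>. The operator
  \<open>A = i\<epsilon>(I + V)(I - V)\<^sup>-\<^sup>1\<close> on \<open>D = (I - V) l2\<close> is closed, symmetric and injective, and since the
  adjoint of \<open>V\<close> has no eigenvalues on the unit circle, both \<open>D\<close> and \<open>A D\<close> are dense.
  A vector is orthogonal to \<open>(A - z) D\<close> iff along every chain it satisfies a first order
  recursion \<open>g(\<sigma> q) = \<rho> g(q)\<close>; for \<open>Im z \<noteq> 0\<close> we have \<open>|\<rho>| < 1\<close> exactly on the chains whose sign
  is that of \<open>Im z\<close>, and on the other chains the only square summable solution is zero.
  Hence \<open>dim N\<^sub>z\<close> is the number of chains of sign \<open>sgn (Im z)\<close>, and these two numbers can be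
  prescribed arbitrarily.\<close>

section \<open>The sequence space\<close>

lemma mem_l2_iff: "f \<in> l2 \<longleftrightarrow> summable (\<lambda>k. (cmod (f k))\<^sup>2)"
  by (simp add: l2_def)

lemma cmod_add_square_le: "(cmod (a + b))\<^sup>2 \<le> 2 * (cmod a)\<^sup>2 + 2 * (cmod b)\<^sup>2"
proof -
  have "(cmod (a + b))\<^sup>2 \<le> (cmod a + cmod b)\<^sup>2"
    by (simp add: power_mono norm_triangle_ineq)
  also have "\<dots> \<le> 2 * (cmod a)\<^sup>2 + 2 * (cmod b)\<^sup>2"
    using zero_le_power2[of "cmod a - cmod b"] by (simp add: power2_eq_square algebra_simps)
  finally show ?thesis .
qed

lemma l2_add: "f \<in> l2 \<Longrightarrow> g \<in> l2 \<Longrightarrow> f + g \<in> l2"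
  unfolding mem_l2_iff
  by (rule summable_comparison_test[where g="\<lambda>k. 2 * (cmod (f k))\<^sup>2 + 2 * (cmod (g k))\<^sup>2"])
     (auto intro!: summable_add summable_mult cmod_add_square_le)

lemma l2_mult_bounded:
  assumes "\<And>k. cmod (m k) \<le> B" and "f \<in> l2"
  shows "(\<lambda>k. m k * f k) \<in> l2"
  unfolding mem_l2_iff
proof (rule summable_comparison_test[where g="\<lambda>k. B\<^sup>2 * (cmod (f k))\<^sup>2"])
  show "summable (\<lambda>k. B\<^sup>2 * (cmod (f k))\<^sup>2)"
    using assms(2) unfolding mem_l2_iff by (rule summable_mult)
  have "(cmod (m k * f k))\<^sup>2 \<le> B\<^sup>2 * (cmod (f k))\<^sup>2" for k
    using assms(1)[of k] by (simp add: norm_mult power_mult_distrib[symmetric] power_mono mult_right_mono)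
  then show "\<exists>N. \<forall>k\<ge>N. norm ((cmod (m k * f k))\<^sup>2) \<le> B\<^sup>2 * (cmod (f k))\<^sup>2"
    by simp
qed

lemma l2_vscale: "f \<in> l2 \<Longrightarrow> vscale c f \<in> l2"
  unfolding vscale_def by (rule l2_mult_bounded[where B="cmod c"]) auto

lemma l2_diff: "f \<in> l2 \<Longrightarrow> g \<in> l2 \<Longrightarrow> f - g \<in> l2"
proof -
  have "f - g = f + vscale (-1) g"
    by (simp add: vscale_def fun_eq_iff)
  then show "f \<in> l2 \<Longrightarrow> g \<in> l2 \<Longrightarrow> f - g \<in> l2"
    by (metis l2_add l2_vscale)
qed

lemma l2_zero: "0 \<in> l2"
  by (simp add: mem_l2_iff)

lemma l2_finite_support: "finite {k. f k \<noteq> 0} \<Longrightarrow> f \<in> l2"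
  unfolding mem_l2_iff by (rule summable_finite) auto

lemma l2_inner_summable:
  assumes "f \<in> l2" and "g \<in> l2"
  shows "summable (\<lambda>k. f k * cnj (g k))"
proof (rule summable_norm_cancel, rule summable_comparison_test)
  show "summable (\<lambda>k. (cmod (f k))\<^sup>2 + (cmod (g k))\<^sup>2)"
    using assms unfolding mem_l2_iff by (rule summable_add)
  have "cmod (f k) * cmod (g k) \<le> (cmod (f k))\<^sup>2 + (cmod (g k))\<^sup>2" for k
    using sum_squares_bound[of "cmod (f k)" "cmod (g k)"]
      mult_nonneg_nonneg[OF norm_ge_zero norm_ge_zero, of "f k" "g k"] by linarith
  then show "\<exists>N. \<forall>k\<ge>N. norm (norm (f k * cnj (g k))) \<le> (cmod (f k))\<^sup>2 + (cmod (g k))\<^sup>2"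
    by (simp add: norm_mult)
qed

lemma cmod_le_l2_norm: "f \<in> l2 \<Longrightarrow> cmod (f p) \<le> l2_norm f"
  unfolding l2_norm_def mem_l2_iff
  by (rule real_le_rsqrt) (use sum_le_suminf[of "\<lambda>k. (cmod (f k))\<^sup>2" "{p}"] in simp)

lemma l2_tendsto_coordinate:
  assumes "\<And>j. x j \<in> l2" and "u \<in> l2" and "l2_tendsto x u"
  shows "(\<lambda>j. x j p) \<longlonglongrightarrow> u p"
proof -
  have "(\<lambda>j. x j p - u p) \<longlonglongrightarrow> 0"
  proof (rule Lim_null_comparison)
    show "(\<lambda>j. l2_norm (x j - u)) \<longlonglongrightarrow> 0"
      using assms(3) by (simp add: l2_tendsto_def)
    show "\<forall>\<^sub>F j in sequentially. norm (x j p - u p) \<le> l2_norm (x j - u)"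
      using cmod_le_l2_norm[OF l2_diff[OF assms(1,2)]] by simp
  qed
  then show ?thesis
    by (simp add: LIM_zero_iff)
qed

lemma l2_tendsto_zero: "f \<in> l2 \<Longrightarrow> f \<longlonglongrightarrow> 0"
proof -
  assume "f \<in> l2"
  then have "(\<lambda>k. sqrt ((cmod (f k))\<^sup>2)) \<longlonglongrightarrow> sqrt 0"
    unfolding mem_l2_iff by (intro tendsto_real_sqrt summable_LIMSEQ_zero)
  then show ?thesis
    by (simp add: tendsto_norm_zero_iff)
qed

section \<open>A criterion for density\<close>

definition l2_sqnorm :: "vec \<Rightarrow> real" where
  "l2_sqnorm x = (\<Sum>p. (cmod (x p))\<^sup>2)"

definition unit_vec :: "nat \<Rightarrow> vec" where
  "unit_vec k = (\<lambda>p. if p = k then 1 else 0)"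

lemma unit_vec_l2: "unit_vec k \<in> l2"
  by (rule l2_finite_support) (simp add: unit_vec_def)

lemma sum_fun_apply: "(\<Sum>i\<in>I. w i) p = (\<Sum>i\<in>I. w i p)"
  by (induction I rule: infinite_finite_induct) auto

lemma l2_sum: "finite I \<Longrightarrow> (\<And>i. i \<in> I \<Longrightarrow> w i \<in> l2) \<Longrightarrow> (\<Sum>i\<in>I. w i) \<in> l2"
  by (induction I rule: finite_induct) (auto simp: l2_zero l2_add)

lemma l2_sqnorm_sum_le:
  assumes "finite I" and "\<And>i. i \<in> I \<Longrightarrow> w i \<in> l2"
  shows "l2_sqnorm (\<Sum>i\<in>I. w i) \<le> real (card I) * (\<Sum>i\<in>I. l2_sqnorm (w i))"
proof -
  have summable: "summable (\<lambda>p. (cmod (w i p))\<^sup>2)" if "i \<in> I" for i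
    using assms(2)[OF that] by (simp add: mem_l2_iff)
  have "(cmod ((\<Sum>i\<in>I. w i) p))\<^sup>2 \<le> real (card I) * (\<Sum>i\<in>I. (cmod (w i p))\<^sup>2)" for p
  proof -
    have "(cmod ((\<Sum>i\<in>I. w i) p))\<^sup>2 \<le> (\<Sum>i\<in>I. cmod (w i p))\<^sup>2"
      unfolding sum_fun_apply by (simp add: power_mono norm_sum)
    also have "\<dots> \<le> (\<Sum>i\<in>I. (cmod (w i p))\<^sup>2) * card I"
      by (rule sum_squared_le_sum_of_squares)
    finally show ?thesis
      by (simp add: mult.commute)
  qed
  then have "l2_sqnorm (\<Sum>i\<in>I. w i) \<le> (\<Sum>p. real (card I) * (\<Sum>i\<in>I. (cmod (w i p))\<^sup>2))"
    unfolding l2_sqnorm_def using l2_sum[OF assms]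
    by (intro suminf_le summable_mult summable_sum summable) (auto simp: mem_l2_iff)
  also have "\<dots> = real (card I) * (\<Sum>i\<in>I. l2_sqnorm (w i))"
    unfolding l2_sqnorm_def
    using suminf_mult[OF summable_sum[of I "\<lambda>i p. (cmod (w i p))\<^sup>2", OF summable]]
      suminf_sum[of I "\<lambda>i p. (cmod (w i p))\<^sup>2", OF summable] by simp
  finally show ?thesis .
qed

lemma l2_sqnorm_add_le:
  assumes "x \<in> l2" and "y \<in> l2"
  shows "l2_sqnorm (x + y) \<le> 2 * l2_sqnorm x + 2 * l2_sqnorm y"
proof -
  have x: "summable (\<lambda>p. (cmod (x p))\<^sup>2)" and y: "summable (\<lambda>p. (cmod (y p))\<^sup>2)"
    and xy: "summable (\<lambda>p. (cmod ((x + y) p))\<^sup>2)"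
    using assms l2_add[OF assms] by (simp_all add: mem_l2_iff)
  have "l2_sqnorm (x + y) \<le> (\<Sum>p. 2 * (cmod (x p))\<^sup>2 + 2 * (cmod (y p))\<^sup>2)"
    unfolding l2_sqnorm_def using xy
    by (intro suminf_le summable_add summable_mult x y) (auto simp: cmod_add_square_le)
  also have "\<dots> = 2 * l2_sqnorm x + 2 * l2_sqnorm y"
    unfolding l2_sqnorm_def
    by (simp add: suminf_add[symmetric] suminf_mult summable_mult x y)
  finally show ?thesis .
qed

lemma l2_sqnorm_vscale: "x \<in> l2 \<Longrightarrow> l2_sqnorm (vscale c x) = (cmod c)\<^sup>2 * l2_sqnorm x"
  unfolding l2_sqnorm_def vscale_def mem_l2_iff
  by (simp add: norm_mult power_mult_distrib suminf_mult)

lemma l2_norm_less: "l2_sqnorm x < e\<^sup>2 \<Longrightarrow> e > 0 \<Longrightarrow> l2_norm x < e"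
  unfolding l2_norm_def l2_sqnorm_def by (metis real_sqrt_abs real_sqrt_less_mono abs_of_pos)

lemma l2_tail:
  assumes "x \<in> l2"
  shows "(\<lambda>p. if p < M then 0 else x p) \<in> l2"
proof -
  have "(\<lambda>p. (if p < M then 0 else 1) * x p) \<in> l2"
    using assms by (rule l2_mult_bounded[where B=1, rotated]) simp
  also have "(\<lambda>p. (if p < M then 0 else 1) * x p) = (\<lambda>p. if p < M then 0 else x p)"
    by auto
  finally show ?thesis .
qed

lemma l2_sqnorm_tail_small:
  assumes "x \<in> l2" and "e > 0"
  obtains M where "l2_sqnorm (\<lambda>p. if p < M then 0 else x p) < e"
proof -
  define a where "a p = (cmod (x p))\<^sup>2" for p
  have a: "summable a"
    unfolding a_def using assms(1) by (simp add: mem_l2_iff)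
  then have "\<forall>\<^sub>F n in sequentially. suminf a - e < (\<Sum>i<n. a i)"
    using order_tendstoD(1)[OF summable_LIMSEQ[OF a], of "suminf a - e"] assms(2) by simp
  then obtain M where M: "suminf a - e < (\<Sum>i<M. a i)"
    by (auto simp: eventually_sequentially)
  have "(\<lambda>p. a p - (if p \<in> {..<M} then a p else 0)) sums (suminf a - (\<Sum>i<M. a i))"
    by (intro sums_diff summable_sums a sums_If_finite_set) simp
  moreover have "(\<lambda>p. a p - (if p \<in> {..<M} then a p else 0))
      = (\<lambda>p. (cmod (if p < M then 0 else x p))\<^sup>2)"
    by (auto simp: a_def)
  ultimately have "l2_sqnorm (\<lambda>p. if p < M then 0 else x p) = suminf a - (\<Sum>i<M. a i)"
    unfolding l2_sqnorm_def by (simp add: sums_iff)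
  with M show ?thesis
    by (intro that[of M]) simp
qed

lemma linear_subspace_sum:
  assumes "linear_subspace S" and "finite I" and "\<And>i. i \<in> I \<Longrightarrow> w i \<in> S"
  shows "(\<Sum>i\<in>I. vscale (c i) (w i)) \<in> S"
  using assms(2,3) assms(1)[unfolded linear_subspace_def]
  by (induction I rule: finite_induct) auto

lemma linear_subspace_image:
  assumes "lin_operator D A"
  shows "linear_subspace (A ` D)"
proof -
  have D: "linear_subspace D" and A: "A ` D \<subseteq> l2"
    and add: "\<And>x y. x \<in> D \<Longrightarrow> y \<in> D \<Longrightarrow> A (x + y) = A x + A y"
    and scale: "\<And>c x. x \<in> D \<Longrightarrow> A (vscale c x) = vscale c (A x)"
    using assms by (auto simp: lin_operator_def)
  have "A 0 = 0"
    using scale[of 0 0] D by (simp add: linear_subspace_def vscale_def zero_fun_def)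
  then have "0 \<in> A ` D"
    using D by (metis image_eqI linear_subspace_def)
  moreover have "A x + A y \<in> A ` D" if "x \<in> D" "y \<in> D" for x y
    using that D add[OF that, symmetric] by (auto simp: linear_subspace_def)
  moreover have "vscale c (A x) \<in> A ` D" if "x \<in> D" for c x
    using that D scale[OF that, symmetric] by (auto simp: linear_subspace_def)
  ultimately show ?thesis
    using A by (auto simp: linear_subspace_def)
qed

lemma truncation_decomposition:
  "x - (\<Sum>k<M. vscale (x k) (s k))
     = (\<lambda>p. if p < M then 0 else x p) + (\<Sum>k<M. vscale (x k) (unit_vec k - s k))"
proof
  fix p
  have "(\<Sum>k<M. x k * unit_vec k p) = (if p < M then x p else 0)"
    by (simp add: unit_vec_def if_distrib sum.delta cong: if_cong)
  then show "(x - (\<Sum>k<M. vscale (x k) (s k))) p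
      = ((\<lambda>p. if p < M then 0 else x p) + (\<Sum>k<M. vscale (x k) (unit_vec k - s k))) p"
    by (simp add: sum_fun_apply vscale_def algebra_simps sum_subtractf)
qed

lemma l2_sqnorm_unit_vec_combination_le:
  assumes "\<And>k. k < M \<Longrightarrow> s k \<in> l2" and "\<And>k. k < M \<Longrightarrow> l2_sqnorm (unit_vec k - s k) \<le> \<eta>"
  shows "l2_sqnorm (\<Sum>k<M. vscale (x k) (unit_vec k - s k)) \<le> real M * (\<Sum>k<M. (cmod (x k))\<^sup>2) * \<eta>"
proof -
  have l2: "vscale (x k) (unit_vec k - s k) \<in> l2" if "k < M" for k
    using assms(1)[OF that] by (intro l2_vscale l2_diff unit_vec_l2)
  have "l2_sqnorm (\<Sum>k<M. vscale (x k) (unit_vec k - s k))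
      \<le> real M * (\<Sum>k<M. l2_sqnorm (vscale (x k) (unit_vec k - s k)))"
    using l2_sqnorm_sum_le[of "{..<M}"] l2 by simp
  also have "\<dots> \<le> real M * (\<Sum>k<M. (cmod (x k))\<^sup>2 * \<eta>)"
    using assms by (intro mult_left_mono sum_mono)
      (simp_all add: l2_sqnorm_vscale l2_diff unit_vec_l2 mult_left_mono)
  finally show ?thesis
    by (simp add: sum_distrib_right mult.assoc)
qed

lemma mult_div_succ_mult_succ_le:
  fixes X c :: real
  assumes "X \<ge> 0" and "c \<ge> 0"
  shows "real M * X * (c / ((real M + 1) * (X + 1))) \<le> c"
proof -
  have "real M * X * (c / ((real M + 1) * (X + 1))) = c * (real M / (real M + 1)) * (X / (X + 1))"
    using assms by (simp add: field_simps)
  also have "\<dots> \<le> c * 1 * 1"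
    using assms by (intro mult_mono) auto
  finally show ?thesis
    by simp
qed

lemma l2_dense_if_approx_unit_vec:
  assumes S: "linear_subspace S"
    and approx: "\<And>k \<eta>. \<eta> > 0 \<Longrightarrow> \<exists>s\<in>S. l2_sqnorm (unit_vec k - s) < \<eta>"
  shows "l2_dense S"
  unfolding l2_dense_def
proof (intro ballI allI impI)
  fix x :: vec and e :: real
  assume x: "x \<in> l2" and e: "e > 0"
  obtain M where M: "l2_sqnorm (\<lambda>p. if p < M then 0 else x p) < e\<^sup>2 / 4"
    using l2_sqnorm_tail_small[OF x, of "e\<^sup>2/4"] e by auto
  define X where "X = (\<Sum>k<M. (cmod (x k))\<^sup>2)"
  have "X \<ge> 0"
    by (simp add: X_def sum_nonneg)
  define \<eta> where "\<eta> = e\<^sup>2 / 4 / ((real M + 1) * (X + 1))"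
  have "\<eta> > 0"
    unfolding \<eta>_def using e \<open>X \<ge> 0\<close> by simp
  then have "\<forall>k. \<exists>s. s \<in> S \<and> l2_sqnorm (unit_vec k - s) < \<eta>"
    using approx by blast
  then obtain s where s: "\<And>k. s k \<in> S" "\<And>k. l2_sqnorm (unit_vec k - s k) < \<eta>"
    by metis
  have s_l2: "s k \<in> l2" for k
    using s(1) S by (auto simp: linear_subspace_def)
  define tail where "tail = (\<lambda>p. if p < M then 0 else x p)"
  have "real M * X * \<eta> \<le> e\<^sup>2 / 4"
    unfolding \<eta>_def using \<open>X \<ge> 0\<close> by (rule mult_div_succ_mult_succ_le) simp
  then have comb: "l2_sqnorm (\<Sum>k<M. vscale (x k) (unit_vec k - s k)) \<le> e\<^sup>2 / 4"
    using l2_sqnorm_unit_vec_combination_le[of M s \<eta> x, OF s_l2 less_imp_le[OF s(2)]]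
    unfolding X_def by linarith
  have comb_l2: "(\<Sum>k<M. vscale (x k) (unit_vec k - s k)) \<in> l2"
    by (intro l2_sum l2_vscale l2_diff unit_vec_l2 s_l2) auto
  have "l2_sqnorm (x - (\<Sum>k<M. vscale (x k) (s k)))
      \<le> 2 * l2_sqnorm tail + 2 * l2_sqnorm (\<Sum>k<M. vscale (x k) (unit_vec k - s k))"
    unfolding truncation_decomposition tail_def[symmetric]
    by (rule l2_sqnorm_add_le[OF l2_tail[OF x, of M, folded tail_def] comb_l2])
  also have "\<dots> < e\<^sup>2"
    using M comb unfolding tail_def by linarith
  finally have "l2_norm (x - (\<Sum>k<M. vscale (x k) (s k))) < e"
    using e by (rule l2_norm_less)
  moreover have "(\<Sum>k<M. vscale (x k) (s k)) \<in> S"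
    using linear_subspace_sum[OF S, of "{..<M}" s x] s(1) by simp
  ultimately show "\<exists>s\<in>S. l2_norm (x - s) < e"
    by blast
qed

section \<open>Dimensions\<close>

interpretation vs: vector_space vscale
  by unfold_locales (auto simp: vscale_def fun_eq_iff algebra_simps)

lemma lin_independent_imp_independent:
  assumes "finite B" and "lin_independent B"
  shows "vs.independent B"
  unfolding vs.dependent_explicit
proof
  assume "\<exists>t u. finite t \<and> t \<subseteq> B \<and> (\<Sum>v\<in>t. vscale (u v) v) = 0 \<and> (\<exists>v\<in>t. u v \<noteq> 0)"
  then obtain t u v where t: "t \<subseteq> B" "(\<Sum>v\<in>t. vscale (u v) v) = 0" "v \<in> t" "u v \<noteq> 0"
    by blast
  define c where "c b = (if b \<in> t then u b else 0)" for b
  have "(\<Sum>b\<in>B. vscale (c b) b) = (\<Sum>b\<in>t. vscale (u b) b)"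
    by (rule sum.mono_neutral_cong_right[OF assms(1) t(1)]) (auto simp: c_def vscale_def fun_eq_iff)
  with t(2) have "(\<Sum>b\<in>B. vscale (c b) b) = 0"
    by simp
  with assms(2) t(1,3) have "c v = 0"
    unfolding lin_independent_def by blast
  with t show False
    by (simp add: c_def)
qed

lemma vdim_ge_card:
  "finite B \<Longrightarrow> B \<subseteq> S \<Longrightarrow> lin_independent B \<Longrightarrow> enat (card B) \<le> vdim S"
  unfolding vdim_def by (blast intro: Sup_upper)

lemma vdim_le:
  assumes "\<And>B. finite B \<Longrightarrow> B \<subseteq> S \<Longrightarrow> lin_independent B \<Longrightarrow> card B \<le> N"
  shows "vdim S \<le> enat N"
  unfolding vdim_def using assms by (auto intro!: Sup_least)

lemma enat_eq_infinity_if_unbounded: "(\<And>n. enat n \<le> x) \<Longrightarrow> x = \<infinity>"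
  by (cases x) (auto, metis Suc_n_not_le_n enat_ord_simps(1))

definition ecard :: "'a set \<Rightarrow> enat" where
  "ecard X = (if finite X then enat (card X) else \<infinity>)"

lemma ecard_image: "inj_on f X \<Longrightarrow> ecard (f ` X) = ecard X"
  by (simp add: ecard_def finite_image_iff card_image)

lemma ecard_enat_less: "ecard {i. enat i < n} = n"
  by (cases n) (simp_all add: ecard_def lessThan_def[symmetric] infinite_UNIV_char_0)

section \<open>Chain systems\<close>

text \<open>The points outside \<open>range \<sigma>\<close> are the heads of the chains; the chains with head in \<open>P\<close>
  get the sign \<open>+1\<close>, the others \<open>-1\<close>.\<close>

locale chain_system =
  fixes \<sigma> :: "nat \<Rightarrow> nat" and P :: "nat set"
  assumes strict_mono_shift: "strict_mono \<sigma>"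
    and shift_0_pos: "0 < \<sigma> 0"
    and P_disjoint_range: "P \<inter> range \<sigma> = {}"
begin

lemma inj_shift: "inj \<sigma>"
  using strict_mono_shift strict_mono_imp_inj_on by blast

lemma less_shift: "k < \<sigma> k"
proof (induction k)
  case 0
  then show ?case
    using shift_0_pos by simp
next
  case (Suc k)
  then show ?case
    using strict_mono_shift by (simp add: strict_mono_def) (metis Suc_le_eq le_less_trans lessI)
qed

lemma strict_mono_funpow_shift: "strict_mono (\<lambda>j. (\<sigma> ^^ j) c)"
  by (rule strict_mono_Suc_iff[THEN iffD2]) (simp add: less_shift)

definition V :: "vec \<Rightarrow> vec" where
  "V f = (\<lambda>p. if p \<in> range \<sigma> then f (inv \<sigma> p) else 0)"

lemma V_shift [simp]: "V f (\<sigma> q) = f q"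
  by (simp add: V_def inj_shift)

lemma V_not_in_range: "p \<notin> range \<sigma> \<Longrightarrow> V f p = 0"
  by (simp add: V_def)

lemma V_add: "V (f + g) = V f + V g"
  and V_diff: "V (f - g) = V f - V g"
  and V_vscale: "V (vscale c f) = vscale c (V f)"
  and V_mult_left: "V (\<lambda>p. c * f p) = (\<lambda>p. c * V f p)"
  by (auto simp: V_def fun_eq_iff vscale_def)

lemma sums_V_reindex: "(\<lambda>q. h (\<sigma> q)) sums s \<Longrightarrow> (\<forall>p. p \<notin> range \<sigma> \<longrightarrow> h p = 0) \<Longrightarrow> h sums s"
  by (subst (asm) sums_mono_reindex[OF strict_mono_shift]) auto

lemma V_l2:
  assumes "f \<in> l2"
  shows "V f \<in> l2"
proof -
  have "(\<lambda>q. (cmod (V f (\<sigma> q)))\<^sup>2) sums (\<Sum>k. (cmod (f k))\<^sup>2)"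
    using assms by (simp add: mem_l2_iff summable_sums)
  then have "(\<lambda>p. (cmod (V f p))\<^sup>2) sums (\<Sum>k. (cmod (f k))\<^sup>2)"
    by (rule sums_V_reindex) (simp add: V_not_in_range)
  then show ?thesis
    by (auto simp: mem_l2_iff sums_summable)
qed

lemma V_eigenvector_eq_zero:
  assumes "\<And>p. h p = c * V h p"
  shows "h = 0"
proof -
  have "h p = 0" for p
  proof (induction p rule: less_induct)
    case (less p)
    show ?case
    proof (cases "p \<in> range \<sigma>")
      case True
      then obtain q where "p = \<sigma> q"
        by auto
      with less less_shift[of q] show ?thesis
        using assms[of p] by simp
    next
      case False
      then show ?thesis
        using assms[of p] V_not_in_range by simp
    qed
  qed
  then show ?thesis
    by auto
qed

lemma ex_chain_head: "\<exists>c j. c \<notin> range \<sigma> \<and> (\<sigma> ^^ j) c = p"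
proof (induction p rule: less_induct)
  case (less p)
  show ?case
  proof (cases "p \<in> range \<sigma>")
    case True
    then obtain q where q: "p = \<sigma> q"
      by auto
    with less less_shift[of q] obtain c j where "c \<notin> range \<sigma>" "(\<sigma> ^^ j) c = q"
      by blast
    with q show ?thesis
      by (intro exI[of _ c] exI[of _ "Suc j"]) simp
  next
    case False
    then show ?thesis
      by (intro exI[of _ p] exI[of _ 0]) simp
  qed
qed

lemma chain_head_unique:
  "c \<notin> range \<sigma> \<Longrightarrow> c' \<notin> range \<sigma> \<Longrightarrow> (\<sigma> ^^ j) c = (\<sigma> ^^ j') c' \<Longrightarrow> c = c' \<and> j = j'"
proof (induction j arbitrary: j')
  case 0
  then show ?case
    by (cases j') auto
next
  case (Suc j)
  then show ?case
    by (cases j') (auto dest: injD[OF inj_shift])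
qed

definition head :: "nat \<Rightarrow> nat" where
  "head p = (SOME c. c \<notin> range \<sigma> \<and> (\<exists>j. (\<sigma> ^^ j) c = p))"

definition depth :: "nat \<Rightarrow> nat" where
  "depth p = (SOME j. (\<sigma> ^^ j) (head p) = p)"

lemma head_not_in_range: "head p \<notin> range \<sigma>"
  and funpow_depth_head: "(\<sigma> ^^ depth p) (head p) = p"
proof -
  have "head p \<notin> range \<sigma> \<and> (\<exists>j. (\<sigma> ^^ j) (head p) = p)"
    unfolding head_def by (rule someI_ex) (use ex_chain_head in blast)
  then show "head p \<notin> range \<sigma>" "(\<sigma> ^^ depth p) (head p) = p"
    unfolding depth_def by (auto intro: someI_ex)
qed

lemma head_funpow [simp]: "c \<notin> range \<sigma> \<Longrightarrow> head ((\<sigma> ^^ j) c) = c"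
  and depth_funpow [simp]: "c \<notin> range \<sigma> \<Longrightarrow> depth ((\<sigma> ^^ j) c) = j"
  using chain_head_unique[where c="head ((\<sigma> ^^ j) c)" and c'=c and j="depth ((\<sigma> ^^ j) c)" and j'=j]
    head_not_in_range funpow_depth_head[of "(\<sigma> ^^ j) c"] by auto

lemma head_shift [simp]: "head (\<sigma> p) = head p"
  and depth_shift [simp]: "depth (\<sigma> p) = Suc (depth p)"
  using head_funpow[OF head_not_in_range, of "Suc (depth p)" p]
    depth_funpow[OF head_not_in_range, of "Suc (depth p)" p] funpow_depth_head[of p] by simp_all

lemma head_funpow_shift [simp]: "head ((\<sigma> ^^ j) k) = head k"
  and depth_funpow_shift [simp]: "depth ((\<sigma> ^^ j) k) = j + depth k"
  by (induction j) auto

lemma depth_eq_0_iff: "depth p = 0 \<longleftrightarrow> p \<notin> range \<sigma>"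
  using depth_funpow[of p 0] by auto

lemma on_chain_iff: "(\<exists>j. p = (\<sigma> ^^ j) k) \<longleftrightarrow> head p = head k \<and> depth k \<le> depth p"
proof
  assume "head p = head k \<and> depth k \<le> depth p"
  then have "p = (\<sigma> ^^ (depth p - depth k)) ((\<sigma> ^^ depth k) (head k))"
    using funpow_depth_head[of p] by (metis funpow_add comp_apply le_add_diff_inverse2)
  then show "\<exists>j. p = (\<sigma> ^^ j) k"
    using funpow_depth_head[of k] by auto
qed auto

lemma head_idem [simp]: "head (head p) = head p"
  using head_funpow[OF head_not_in_range, of 0 p] by simp

definition sgn_chain :: "nat \<Rightarrow> complex" where
  "sgn_chain p = (if head p \<in> P then 1 else -1)"

lemma sgn_chain_head [simp]: "sgn_chain (head p) = sgn_chain p"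
  and sgn_chain_shift [simp]: "sgn_chain (\<sigma> p) = sgn_chain p"
  and sgn_chain_funpow_shift [simp]: "sgn_chain ((\<sigma> ^^ j) k) = sgn_chain k"
  and sgn_chain_square [simp]: "sgn_chain p * sgn_chain p = 1"
  and cmod_sgn_chain [simp]: "cmod (sgn_chain p) = 1"
  and sgn_chain_nonzero [simp]: "sgn_chain p \<noteq> 0"
  and cnj_sgn_chain [simp]: "cnj (sgn_chain p) = sgn_chain p"
  by (simp_all add: sgn_chain_def)

text \<open>\<open>A\<close> is the Cayley-type transform \<open>i\<epsilon>(I + V)(I - V)\<^sup>-\<^sup>1\<close>, with \<open>L = I - V\<close> and \<open>J = i\<epsilon>(I + V)\<close>.\<close>

definition L :: "vec \<Rightarrow> vec" where
  "L f = f - V f"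

definition J :: "vec \<Rightarrow> vec" where
  "J f = (\<lambda>p. \<i> * sgn_chain p * (f p + V f p))"

definition D :: "vec set" where
  "D = L ` l2"

definition A :: "vec \<Rightarrow> vec" where
  "A g = J (inv_into l2 L g)"

lemma L_l2: "f \<in> l2 \<Longrightarrow> L f \<in> l2"
  by (simp add: L_def l2_diff V_l2)

lemma J_l2:
  assumes "f \<in> l2"
  shows "J f \<in> l2"
proof -
  have "(\<lambda>p. f p + V f p) \<in> l2"
    using l2_add[OF assms V_l2[OF assms]] by (simp add: plus_fun_def)
  then show ?thesis
    unfolding J_def mult.assoc[symmetric] by (rule l2_mult_bounded[where B=1, rotated]) (simp add: norm_mult)
qed

lemma L_add: "L (f + g) = L f + L g"
  by (simp add: L_def V_add)

lemma L_vscale: "L (vscale c f) = vscale c (L f)"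
  by (simp add: L_def V_vscale vscale_def fun_eq_iff right_diff_distrib V_mult_left)

lemma J_add: "J (f + g) = J f + J g"
  by (simp add: J_def V_add fun_eq_iff algebra_simps)

lemma J_vscale: "J (vscale c f) = vscale c (J f)"
  by (simp add: J_def V_mult_left vscale_def fun_eq_iff algebra_simps)

lemma inj_L: "inj L"
proof (rule injI)
  fix f g
  assume "L f = L g"
  then have "f p - V f p = g p - V g p" for p
    by (simp add: L_def fun_eq_iff)
  then have "(f - g) p = 1 * V (f - g) p" for p
    by (simp add: V_diff algebra_simps)
  from V_eigenvector_eq_zero[OF this] show "f = g"
    by (simp add: fun_eq_iff)
qed

lemma inj_J: "inj J"
proof (rule injI)
  fix f g
  assume "J f = J g"
  then have "f p + V f p = g p + V g p" for p
    by (auto simp: J_def fun_eq_iff)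
  then have "(f - g) p = -1 * V (f - g) p" for p
    by (simp add: V_diff algebra_simps)
  from V_eigenvector_eq_zero[OF this] show "f = g"
    by (simp add: fun_eq_iff)
qed

lemma A_L: "f \<in> l2 \<Longrightarrow> A (L f) = J f"
  by (simp add: A_def inv_into_f_f inj_on_subset[OF inj_L])

lemma D_subset_l2: "D \<subseteq> l2"
  using L_l2 by (auto simp: D_def)

lemma linear_subspace_D: "linear_subspace D"
  unfolding linear_subspace_def
proof (intro conjI ballI allI D_subset_l2)
  show "0 \<in> D"
    using L_vscale[of 0 0] l2_zero by (force simp: D_def vscale_def zero_fun_def)
  show "x + y \<in> D" if "x \<in> D" "y \<in> D" for x y
    using that by (auto simp: D_def L_add[symmetric] l2_add)
  show "vscale c x \<in> D" if "x \<in> D" for c x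
    using that by (auto simp: D_def L_vscale[symmetric] l2_vscale)
qed

lemma lin_operator_A: "lin_operator D A"
  unfolding lin_operator_def
proof (intro conjI ballI allI linear_subspace_D)
  show "A ` D \<subseteq> l2"
    by (auto simp: D_def A_L J_l2)
  show "A (x + y) = A x + A y" if "x \<in> D" "y \<in> D" for x y
    using that by (auto simp: D_def L_add[symmetric] A_L l2_add J_add)
  show "A (vscale c x) = vscale c (A x)" if "x \<in> D" for c x
    using that by (auto simp: D_def L_vscale[symmetric] A_L l2_vscale J_vscale)
qed

lemma inj_on_A: "inj_on A D"
  by (rule inj_onI) (auto simp: D_def A_L dest: injD[OF inj_J])

lemma L_J_recover: "f p = (J f p / (\<i> * sgn_chain p) + L f p) / 2"
  by (simp add: J_def L_def field_simps)

lemma V_tendsto_pointwise: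
  "(\<And>p. (\<lambda>j. f j p) \<longlonglongrightarrow> g p) \<Longrightarrow> (\<lambda>j. V (f j) p) \<longlonglongrightarrow> V g p"
  by (cases "p \<in> range \<sigma>") (auto simp: V_not_in_range)

lemma closed_op_A: "closed_op D A"
  unfolding closed_op_def
proof (intro allI impI)
  fix x u v
  assume "(\<forall>j. x j \<in> D) \<and> u \<in> l2 \<and> v \<in> l2 \<and> l2_tendsto x u \<and> l2_tendsto (\<lambda>j. A (x j)) v"
  then have xD: "\<And>j. x j \<in> D" and u: "u \<in> l2" and v: "v \<in> l2"
    and lim_x: "l2_tendsto x u" and lim_Ax: "l2_tendsto (\<lambda>j. A (x j)) v"
    by auto
  define f where "f j = inv_into l2 L (x j)" for j
  have f: "f j \<in> l2" "x j = L (f j)" for j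
    using xD[of j] by (auto simp: f_def D_def inv_into_f_f inj_on_subset[OF inj_L])
  then have Ax: "A (x j) = J (f j)" for j
    by (simp add: A_L)
  have "(\<lambda>j. x j p) \<longlonglongrightarrow> u p" for p
    using l2_tendsto_coordinate[OF _ u lim_x] D_subset_l2 xD by blast
  moreover have "(\<lambda>j. J (f j) p) \<longlonglongrightarrow> v p" for p
    using l2_tendsto_coordinate[OF _ v lim_Ax] by (simp add: Ax J_l2 f(1))
  ultimately have lim_f: "(\<lambda>j. f j p) \<longlonglongrightarrow> (v p / (\<i> * sgn_chain p) + u p) / 2" for p
    by (subst L_J_recover, unfold f(2)[symmetric]) (intro tendsto_intros, auto)
  define \<Phi> where "\<Phi> p = (v p / (\<i> * sgn_chain p) + u p) / 2" for p
  have "\<Phi> = vscale (1/2) ((\<lambda>p. (1 / (\<i> * sgn_chain p)) * v p) + u)"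
    by (simp add: \<Phi>_def vscale_def fun_eq_iff field_simps)
  moreover have "(\<lambda>p. (1 / (\<i> * sgn_chain p)) * v p) \<in> l2"
    using v by (intro l2_mult_bounded[where B=1]) (auto simp: norm_divide norm_mult)
  ultimately have \<Phi>: "\<Phi> \<in> l2"
    using u by (simp add: l2_add l2_vscale)
  have lim_Vf: "(\<lambda>j. V (f j) p) \<longlonglongrightarrow> V \<Phi> p" for p
    by (rule V_tendsto_pointwise) (use lim_f in \<open>simp add: \<Phi>_def\<close>)
  have "(\<lambda>j. x j p) \<longlonglongrightarrow> L \<Phi> p" for p
    unfolding f(2) L_def using lim_f lim_Vf by (auto simp: \<Phi>_def intro: tendsto_diff)
  with \<open>\<And>p. (\<lambda>j. x j p) \<longlonglongrightarrow> u p\<close> have "u = L \<Phi>"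
    using LIMSEQ_unique by blast
  moreover have "(\<lambda>j. J (f j) p) \<longlonglongrightarrow> J \<Phi> p" for p
    unfolding J_def using lim_f lim_Vf by (auto simp: \<Phi>_def intro!: tendsto_intros)
  with \<open>\<And>p. (\<lambda>j. J (f j) p) \<longlonglongrightarrow> v p\<close> have "v = J \<Phi>"
    using LIMSEQ_unique by blast
  ultimately show "u \<in> D \<and> A u = v"
    using \<Phi> by (simp add: D_def A_L)
qed

lemma sum_sgn_chain_V_V:
  assumes "f \<in> l2" and "k \<in> l2"
  shows "(\<Sum>p. sgn_chain p * V f p * cnj (V k p)) = (\<Sum>p. sgn_chain p * f p * cnj (k p))"
proof -
  have "summable (\<lambda>p. sgn_chain p * f p * cnj (k p))"
    using l2_inner_summable[OF l2_mult_bounded[of sgn_chain 1, OF _ assms(1)] assms(2)]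
    by (simp add: mult.assoc)
  then have "(\<lambda>q. sgn_chain (\<sigma> q) * V f (\<sigma> q) * cnj (V k (\<sigma> q)))
      sums (\<Sum>p. sgn_chain p * f p * cnj (k p))"
    by (simp add: summable_sums)
  then have "(\<lambda>p. sgn_chain p * V f p * cnj (V k p)) sums (\<Sum>p. sgn_chain p * f p * cnj (k p))"
    by (rule sums_V_reindex) (simp add: V_not_in_range)
  then show ?thesis
    by (rule sums_unique[symmetric])
qed

lemma symmetric_op_A: "symmetric_op D A"
  unfolding symmetric_op_def
proof (intro ballI)
  fix x y
  assume "x \<in> D" "y \<in> D"
  then obtain f k where f: "f \<in> l2" "x = L f" and k: "k \<in> l2" "y = L k"
    by (auto simp: D_def)
  have \<epsilon>l2: "(\<lambda>p. sgn_chain p * h p) \<in> l2" if "h \<in> l2" for h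
    using l2_mult_bounded[of sgn_chain 1, OF _ that] by simp
  define t1 where "t1 p = sgn_chain p * f p * cnj (k p)" for p
  define t2 where "t2 p = sgn_chain p * V f p * cnj (k p)" for p
  define t3 where "t3 p = sgn_chain p * f p * cnj (V k p)" for p
  define t4 where "t4 p = sgn_chain p * V f p * cnj (V k p)" for p
  have su: "summable t1" "summable t2" "summable t3" "summable t4"
    unfolding t1_def t2_def t3_def t4_def
    using l2_inner_summable[OF \<epsilon>l2[OF f(1)] k(1)] l2_inner_summable[OF \<epsilon>l2[OF V_l2[OF f(1)]] k(1)]
      l2_inner_summable[OF \<epsilon>l2[OF f(1)] V_l2[OF k(1)]]
      l2_inner_summable[OF \<epsilon>l2[OF V_l2[OF f(1)]] V_l2[OF k(1)]]
    by (simp_all add: mult.assoc)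
  have t41: "suminf t4 = suminf t1"
    unfolding t1_def t4_def by (rule sum_sgn_chain_V_V[OF f(1) k(1)])
  have "l2_inner (A x) y = (\<Sum>p. \<i> * (t1 p + t2 p - t3 p - t4 p))"
    unfolding l2_inner_def f k A_L[OF f(1)] t1_def t2_def t3_def t4_def
    by (simp add: J_def L_def algebra_simps)
  also have "\<dots> = \<i> * (suminf t1 + suminf t2 - suminf t3 - suminf t4)"
    by (intro sums_unique[symmetric] sums_mult sums_diff sums_add summable_sums su)
  also have "\<dots> = - \<i> * (suminf t1 + suminf t3 - suminf t2 - suminf t4)"
    using t41 by (simp add: algebra_simps)
  also have "\<dots> = (\<Sum>p. - \<i> * (t1 p + t3 p - t2 p - t4 p))"
    by (intro sums_unique sums_mult sums_diff sums_add summable_sums su)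
  also have "\<dots> = l2_inner x (A y)"
    unfolding l2_inner_def f k A_L[OF k(1)] t1_def t2_def t3_def t4_def
    by (simp add: J_def L_def algebra_simps)
  finally show "l2_inner (A x) y = l2_inner x (A y)" .
qed

definition chain_vec :: "nat \<Rightarrow> (nat \<Rightarrow> complex) \<Rightarrow> vec" where
  "chain_vec k a = (\<lambda>p. if head p = head k \<and> depth k \<le> depth p then a (depth p - depth k) else 0)"

lemma chain_vec_funpow [simp]: "chain_vec k a ((\<sigma> ^^ j) k) = a j"
  by (simp add: chain_vec_def)

lemma chain_vec_off_chain: "p \<notin> range (\<lambda>j. (\<sigma> ^^ j) k) \<Longrightarrow> chain_vec k a p = 0"
  using on_chain_iff[of p k] by (auto simp: chain_vec_def)

lemma V_chain_vec: "V (chain_vec k a) = chain_vec k (\<lambda>j. case j of 0 \<Rightarrow> 0 | Suc i \<Rightarrow> a i)"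
proof
  fix p
  show "V (chain_vec k a) p = chain_vec k (\<lambda>j. case j of 0 \<Rightarrow> 0 | Suc i \<Rightarrow> a i) p"
  proof (cases "p \<in> range \<sigma>")
    case True
    then obtain q where "p = \<sigma> q"
      by auto
    then show ?thesis
      by (auto simp: chain_vec_def Suc_diff_le split: nat.split)
  next
    case False
    then show ?thesis
      using depth_eq_0_iff[of p] by (auto simp: chain_vec_def V_not_in_range)
  qed
qed

lemma unit_vec_eq_chain_vec: "unit_vec k = chain_vec k (\<lambda>j. if j = 0 then 1 else 0)"
proof
  fix p
  have "p = k" if "head p = head k" "depth p = depth k"
    using that funpow_depth_head[of p] funpow_depth_head[of k] by metis
  then show "unit_vec k p = chain_vec k (\<lambda>j. if j = 0 then 1 else 0) p"
    by (auto simp: unit_vec_def chain_vec_def)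
qed

lemma chain_vec_combination:
  "chain_vec k x - (chain_vec k y - vscale c (chain_vec k z)) = chain_vec k (\<lambda>j. x j - (y j - c * z j))"
  by (auto simp: chain_vec_def vscale_def)

lemma sums_chain_vec:
  assumes "(\<lambda>j. (cmod (a j))\<^sup>2) sums s"
  shows "(\<lambda>p. (cmod (chain_vec k a p))\<^sup>2) sums s"
proof -
  have "(\<lambda>j. (cmod (chain_vec k a ((\<sigma> ^^ j) k)))\<^sup>2) sums s"
    using assms by simp
  then show ?thesis
    by (subst (asm) sums_mono_reindex[OF strict_mono_funpow_shift]) (auto simp: chain_vec_off_chain)
qed

lemma l2_chain_vec: "summable (\<lambda>j. (cmod (a j))\<^sup>2) \<Longrightarrow> chain_vec k a \<in> l2"
  unfolding mem_l2_iff by (rule sums_summable[OF sums_chain_vec[OF summable_sums]])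

text \<open>For \<open>|c| = 1\<close> the range of \<open>I - c V\<close> is dense: with the Fej\'er-type coefficients
  \<open>a\<^sub>j = c\<^sup>j (1 - j/M)\<close>, \<open>j < M\<close>, the error \<open>e\<^sub>k - (I - c V) a\<close> has the \<open>M\<close> coefficients \<open>c\<^sup>j/M\<close>,
  \<open>1 \<le> j \<le> M\<close>, hence squared norm \<open>1/M\<close>.\<close>

lemma fejer_coefficients:
  fixes c :: complex
  assumes "M \<ge> 1"
  defines "a \<equiv> \<lambda>j. if j < M then c ^ j * (1 - of_nat j / of_nat M) else 0"
  shows "(if j = 0 then 1 else 0) - (a j - c * (case j of 0 \<Rightarrow> 0 | Suc i \<Rightarrow> a i))
    = (if 1 \<le> j \<and> j \<le> M then c ^ j / of_nat M else 0)"
proof (cases j)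
  case 0
  then show ?thesis
    using assms by (simp add: a_def)
next
  case (Suc i)
  have M: "(of_nat M :: complex) \<noteq> 0"
    using assms by simp
  consider "Suc i < M" | "Suc i = M" | "Suc i > M"
    by linarith
  then show ?thesis
  proof cases
    case 1
    with Suc M show ?thesis
      by (simp add: a_def field_simps)
  next
    case 2
    then have "M = Suc i"
      by simp
    with Suc show ?thesis
      unfolding a_def by (simp add: field_simps of_nat_Suc del: of_nat_Suc) (simp add: algebra_simps)
  next
    case 3
    with Suc show ?thesis
      by (simp add: a_def)
  qed
qed

lemma approx_unit_vec_I_minus_cV:
  assumes "cmod c = 1" and "\<eta> > 0"
  obtains a where "chain_vec k a \<in> l2"
    and "l2_sqnorm (unit_vec k - (chain_vec k a - vscale c (V (chain_vec k a)))) < \<eta>"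
proof -
  obtain M where M: "inverse (real (Suc M)) < \<eta>"
    using reals_Archimedean[OF assms(2)] by blast
  define a where "a = (\<lambda>j. if j < Suc M then c ^ j * (1 - of_nat j / of_nat (Suc M)) else 0)"
  define b where "b j = (if 1 \<le> j \<and> j \<le> Suc M then c ^ j / of_nat (Suc M) else 0 :: complex)" for j
  have "chain_vec k a \<in> l2"
    by (rule l2_chain_vec, rule summable_finite[of "{..<Suc M}"]) (auto simp: a_def)
  have "unit_vec k - (chain_vec k a - vscale c (V (chain_vec k a)))
      = chain_vec k (\<lambda>j. (if j = 0 then 1 else 0) - (a j - c * (case j of 0 \<Rightarrow> 0 | Suc i \<Rightarrow> a i)))"
    by (simp add: unit_vec_eq_chain_vec V_chain_vec chain_vec_combination)
  also have "\<dots> = chain_vec k b"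
    using fejer_coefficients[where M="Suc M" and c=c] unfolding a_def b_def by simp
  finally have "unit_vec k - (chain_vec k a - vscale c (V (chain_vec k a))) = chain_vec k b" .
  moreover have "(\<lambda>j. (cmod (b j))\<^sup>2) sums (\<Sum>j\<in>{1..Suc M}. (cmod (b j))\<^sup>2)"
    by (rule sums_finite) (auto simp: b_def)
  moreover have "(\<Sum>j\<in>{1..Suc M}. (cmod (b j))\<^sup>2) = (\<Sum>j\<in>{1..Suc M}. 1 / (real (Suc M))\<^sup>2)"
    using norm_of_nat[of "Suc M", where 'a=complex]
    by (intro sum.cong) (auto simp: b_def norm_divide norm_power assms(1) power_divide)
  moreover have "\<dots> = inverse (real (Suc M))"
    using norm_of_nat[of "Suc M", where 'a=complex] by (simp add: power2_eq_square inverse_eq_divide)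
  ultimately have "l2_sqnorm (unit_vec k - (chain_vec k a - vscale c (V (chain_vec k a))))
      = inverse (real (Suc M))"
    unfolding l2_sqnorm_def using sums_chain_vec sums_unique by metis
  with \<open>chain_vec k a \<in> l2\<close> M show ?thesis
    by (intro that) auto
qed

lemma l2_dense_D: "l2_dense D"
proof (rule l2_dense_if_approx_unit_vec[OF linear_subspace_D])
  fix k :: nat and \<eta> :: real
  assume "\<eta> > 0"
  obtain a where "chain_vec k a \<in> l2"
    and "l2_sqnorm (unit_vec k - (chain_vec k a - vscale 1 (V (chain_vec k a)))) < \<eta>"
    using approx_unit_vec_I_minus_cV[of 1 \<eta> k] \<open>\<eta> > 0\<close> by auto
  then show "\<exists>s\<in>D. l2_sqnorm (unit_vec k - s) < \<eta>"
    by (intro bexI[of _ "L (chain_vec k a)"]) (auto simp: D_def L_def vscale_def)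
qed

lemma l2_dense_range_A: "l2_dense (A ` D)"
proof (rule l2_dense_if_approx_unit_vec[OF linear_subspace_image[OF lin_operator_A]])
  fix k :: nat and \<eta> :: real
  assume "\<eta> > 0"
  obtain a where a: "chain_vec k a \<in> l2"
    and "l2_sqnorm (unit_vec k - (chain_vec k a - vscale (-1) (V (chain_vec k a)))) < \<eta>"
    using approx_unit_vec_I_minus_cV[of "-1" \<eta> k] \<open>\<eta> > 0\<close> by auto
  moreover have "vscale (- \<i> * sgn_chain k) (A (L (chain_vec k a)))
      = chain_vec k a - vscale (-1) (V (chain_vec k a))" (is "?l = ?r")
  proof
    fix p
    have "?l p = (sgn_chain k * sgn_chain p) * (chain_vec k a p + V (chain_vec k a) p)"
      by (simp add: A_L[OF a] J_def vscale_def algebra_simps)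
    also have "\<dots> = ?r p"
      using sgn_chain_head[of p] sgn_chain_head[of k] unfolding V_chain_vec
      by (cases "head p = head k") (auto simp: vscale_def chain_vec_def)
    finally show "?l p = ?r p" .
  qed
  moreover have "vscale (- \<i> * sgn_chain k) (A (L (chain_vec k a))) \<in> A ` D"
    using linear_subspace_image[OF lin_operator_A] a unfolding linear_subspace_def D_def by blast
  ultimately show "\<exists>s\<in>A ` D. l2_sqnorm (unit_vec k - s) < \<eta>"
    by metis
qed

definition \<alpha> :: "complex \<Rightarrow> nat \<Rightarrow> complex" where
  "\<alpha> z q = cnj (\<i> * sgn_chain q - z)"

definition \<beta> :: "complex \<Rightarrow> nat \<Rightarrow> complex" where
  "\<beta> z q = cnj (\<i> * sgn_chain q + z)"

lemma \<alpha>_head [simp]: "\<alpha> z (head q) = \<alpha> z q"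
  and \<beta>_head [simp]: "\<beta> z (head q) = \<beta> z q"
  and \<alpha>_funpow_shift [simp]: "\<alpha> z ((\<sigma> ^^ j) q) = \<alpha> z q"
  and \<beta>_funpow_shift [simp]: "\<beta> z ((\<sigma> ^^ j) q) = \<beta> z q"
  by (simp_all add: \<alpha>_def \<beta>_def)

lemma A_minus_z_L:
  assumes "f \<in> l2"
  shows "A (L f) - vscale z (L f) = (\<lambda>p. (\<i> * sgn_chain p - z) * f p + (\<i> * sgn_chain p + z) * V f p)"
  unfolding A_L[OF assms] by (simp add: J_def L_def vscale_def fun_eq_iff algebra_simps)

lemma V_unit_vec: "V (unit_vec q) = unit_vec (\<sigma> q)"
  by (auto simp: V_def unit_vec_def fun_eq_iff inj_shift inj_eq)

lemma defect_space_recursion: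
  assumes "g \<in> defect_space D A z"
  shows "g q * \<alpha> z q + g (\<sigma> q) * \<beta> z q = 0"
proof -
  define y where "y = A (L (unit_vec q)) - vscale z (L (unit_vec q))"
  have "l2_inner g y = 0"
    using assms unit_vec_l2 by (auto simp: y_def defect_space_def orth_compl_def D_def)
  have "y = (\<lambda>p. (\<i> * sgn_chain p - z) * unit_vec q p + (\<i> * sgn_chain p + z) * unit_vec (\<sigma> q) p)"
    unfolding y_def A_minus_z_L[OF unit_vec_l2] V_unit_vec ..
  moreover have "q \<noteq> \<sigma> q"
    using less_shift[of q] by simp
  ultimately have "(\<lambda>p. g p * cnj (y p)) sums (g q * \<alpha> z q + g (\<sigma> q) * \<beta> z q)"
    using sums_finite[of "{q, \<sigma> q}" "\<lambda>p. g p * cnj (y p)"]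
    by (simp add: unit_vec_def \<alpha>_def \<beta>_def)
  with \<open>l2_inner g y = 0\<close> show ?thesis
    by (simp add: l2_inner_def sums_iff)
qed

lemma defect_space_if_recursion:
  assumes g: "g \<in> l2" and rec: "\<And>q. g q * \<alpha> z q + g (\<sigma> q) * \<beta> z q = 0"
  shows "g \<in> defect_space D A z"
  unfolding defect_space_def orth_compl_def
proof (intro CollectI conjI g ballI)
  fix y
  assume "y \<in> (\<lambda>x. A x - vscale z x) ` D"
  then obtain f where f: "f \<in> l2" and y: "y = A (L f) - vscale z (L f)"
    by (auto simp: D_def)
  have bounded: "cmod (\<alpha> z q) \<le> 1 + cmod z" "cmod (\<beta> z q) \<le> 1 + cmod z" for q
    unfolding \<alpha>_def \<beta>_def complex_cnj_diff complex_cnj_add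
    by (rule order_trans[OF norm_triangle_ineq4] order_trans[OF norm_triangle_ineq], simp add: norm_mult)+
  define t1 where "t1 p = \<alpha> z p * g p * cnj (f p)" for p
  define t2 where "t2 p = \<beta> z p * g p * cnj (V f p)" for p
  have t1: "summable t1" and t2: "summable t2"
    unfolding t1_def t2_def
    using l2_inner_summable[OF l2_mult_bounded[OF bounded(1) g] f]
      l2_inner_summable[OF l2_mult_bounded[OF bounded(2) g] V_l2[OF f]] by auto
  have "(\<lambda>q. t2 (\<sigma> q)) sums suminf t2"
    using t2 by (subst sums_mono_reindex[OF strict_mono_shift]) (auto simp: t2_def V_not_in_range summable_sums)
  with t1 have "(\<lambda>q. t1 q + t2 (\<sigma> q)) sums (suminf t1 + suminf t2)"
    by (intro sums_add summable_sums)
  moreover have "t1 q + t2 (\<sigma> q) = (g q * \<alpha> z q + g (\<sigma> q) * \<beta> z q) * cnj (f q)" for q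
    by (simp add: t1_def t2_def \<alpha>_def \<beta>_def algebra_simps)
  ultimately have "suminf t1 + suminf t2 = 0"
    by (simp add: rec sums_iff)
  moreover have "l2_inner g y = suminf t1 + suminf t2"
    unfolding l2_inner_def y A_minus_z_L[OF f] t1_def t2_def
    by (subst suminf_add[OF t1 t2, unfolded t1_def t2_def]) (simp add: \<alpha>_def \<beta>_def algebra_simps)
  ultimately show "l2_inner g y = 0"
    by simp
qed

lemma defect_space_iff:
  "g \<in> defect_space D A z \<longleftrightarrow> g \<in> l2 \<and> (\<forall>q. g q * \<alpha> z q + g (\<sigma> q) * \<beta> z q = 0)"
  using defect_space_recursion defect_space_if_recursion
  by (auto simp: defect_space_def orth_compl_def)

lemma cmod_i_minus_less_i_plus:
  assumes "Im z > 0"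
  shows "cmod (\<i> - z) < cmod (\<i> + z)"
proof -
  have "(cmod (\<i> + z))\<^sup>2 - (cmod (\<i> - z))\<^sup>2 = 4 * Im z"
    unfolding cmod_power2 by (simp add: power2_eq_square algebra_simps)
  with assms have "(cmod (\<i> - z))\<^sup>2 < (cmod (\<i> + z))\<^sup>2"
    by linarith
  then show ?thesis
    by (rule power2_less_imp_less) simp
qed

text \<open>For \<open>Im z \<noteq> 0\<close> the solutions of the recursion decay exactly along the chains whose sign
  is that of \<open>Im z\<close>.\<close>

definition decaying :: "complex \<Rightarrow> nat \<Rightarrow> bool" where
  "decaying z c \<longleftrightarrow> (c \<in> P \<and> Im z > 0) \<or> (c \<notin> P \<and> Im z < 0)"

lemma cmod_\<alpha>_less_\<beta>: "Im z \<noteq> 0 \<Longrightarrow> decaying z (head q) \<Longrightarrow> cmod (\<alpha> z q) < cmod (\<beta> z q)"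
  and cmod_\<beta>_less_\<alpha>: "Im z \<noteq> 0 \<Longrightarrow> \<not> decaying z (head q) \<Longrightarrow> cmod (\<beta> z q) < cmod (\<alpha> z q)"
proof -
  have m: "cmod (- \<i> - z) = cmod (\<i> + z)" "cmod (- \<i> + z) = cmod (\<i> - z)"
    using norm_minus_cancel[of "\<i> + z"] norm_minus_cancel[of "\<i> - z"] by (simp_all add: algebra_simps)
  have lt: "Im z > 0 \<Longrightarrow> cmod (\<i> - z) < cmod (\<i> + z)" "Im z < 0 \<Longrightarrow> cmod (\<i> + z) < cmod (\<i> - z)"
    using cmod_i_minus_less_i_plus[of z] cmod_i_minus_less_i_plus[of "- z"] by simp_all
  show "Im z \<noteq> 0 \<Longrightarrow> decaying z (head q) \<Longrightarrow> cmod (\<alpha> z q) < cmod (\<beta> z q)"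
    using m lt unfolding \<alpha>_def \<beta>_def complex_mod_cnj by (auto simp: decaying_def sgn_chain_def)
  show "Im z \<noteq> 0 \<Longrightarrow> \<not> decaying z (head q) \<Longrightarrow> cmod (\<beta> z q) < cmod (\<alpha> z q)"
    using m lt unfolding \<alpha>_def \<beta>_def complex_mod_cnj
    by (auto simp: decaying_def sgn_chain_def linorder_neq_iff)
qed

lemma defect_space_vanishes:
  assumes g: "g \<in> defect_space D A z" and z: "Im z \<noteq> 0" and q: "\<not> decaying z (head q)"
  shows "g q = 0"
proof -
  have step: "cmod (g p) \<le> cmod (g (\<sigma> p))" if "\<not> decaying z (head p)" for p
  proof -
    have less: "cmod (\<beta> z p) < cmod (\<alpha> z p)"
      by (rule cmod_\<beta>_less_\<alpha>[OF z that])
    have "cmod (g p) * cmod (\<alpha> z p) = cmod (g (\<sigma> p)) * cmod (\<beta> z p)"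
      using arg_cong[OF defect_space_recursion[OF g, of p, unfolded add_eq_0_iff], of cmod]
      by (simp add: norm_mult)
    also have "\<dots> \<le> cmod (g (\<sigma> p)) * cmod (\<alpha> z p)"
      using less by (intro mult_left_mono) auto
    finally have "cmod (g p) * cmod (\<alpha> z p) \<le> cmod (g (\<sigma> p)) * cmod (\<alpha> z p)" .
    moreover have "cmod (\<alpha> z p) > 0"
      using less norm_ge_zero[of "\<beta> z p"] by linarith
    ultimately show ?thesis
      by (rule mult_right_le_imp_le)
  qed
  have "cmod (g q) \<le> cmod (g ((\<sigma> ^^ j) q))" for j
  proof (induction j)
    case (Suc j)
    have "\<not> decaying z (head ((\<sigma> ^^ j) q))"
      using q by simp
    from step[OF this] Suc show ?case
      by simp
  qed simp
  moreover have "(\<lambda>j. g ((\<sigma> ^^ j) q)) \<longlonglongrightarrow> 0"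
    using LIMSEQ_subseq_LIMSEQ[OF l2_tendsto_zero strict_mono_funpow_shift] g
    by (auto simp: defect_space_iff comp_def)
  ultimately have "cmod (g q) \<le> 0"
    by (intro LIMSEQ_le_const[OF tendsto_norm[of _ 0, simplified]]) auto
  then show ?thesis
    by simp
qed

definition \<rho> :: "complex \<Rightarrow> nat \<Rightarrow> complex" where
  "\<rho> z q = - \<alpha> z q / \<beta> z q"

lemma \<rho>_head [simp]: "\<rho> z (head q) = \<rho> z q"
  and \<rho>_funpow_shift [simp]: "\<rho> z ((\<sigma> ^^ j) q) = \<rho> z q"
  by (simp_all add: \<rho>_def \<alpha>_def \<beta>_def)

lemma cmod_\<rho>_less_1: "Im z \<noteq> 0 \<Longrightarrow> decaying z (head q) \<Longrightarrow> cmod (\<rho> z q) < 1"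
  using cmod_\<alpha>_less_\<beta>[of z q] by (auto simp: \<rho>_def norm_divide divide_less_eq)

lemma defect_space_funpow:
  assumes g: "g \<in> defect_space D A z" and z: "Im z \<noteq> 0" and q: "decaying z (head q)"
  shows "g ((\<sigma> ^^ j) q) = \<rho> z q ^ j * g q"
proof (induction j)
  case (Suc j)
  have "\<beta> z ((\<sigma> ^^ j) q) \<noteq> 0"
    using cmod_\<alpha>_less_\<beta>[OF z, of "(\<sigma> ^^ j) q"] q by auto
  with defect_space_recursion[OF g, of "(\<sigma> ^^ j) q"]
  have "g ((\<sigma> ^^ Suc j) q) = \<rho> z q * g ((\<sigma> ^^ j) q)"
    by (simp add: \<rho>_def field_simps add_eq_0_iff)
  with Suc show ?case
    by simp
qed simp

lemma defect_space_expand: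
  assumes g: "g \<in> defect_space D A z" and z: "Im z \<noteq> 0"
  shows "g p = (if decaying z (head p) then \<rho> z p ^ depth p * g (head p) else 0)"
  using defect_space_funpow[OF g z, of "head p" "depth p"] defect_space_vanishes[OF g z, of p]
  by (simp add: funpow_depth_head)

definition geom_vec :: "complex \<Rightarrow> nat \<Rightarrow> vec" where
  "geom_vec z c = chain_vec c (\<lambda>j. \<rho> z c ^ j)"

lemma geom_vec_apply:
  "c \<notin> range \<sigma> \<Longrightarrow> geom_vec z c p = (if head p = c then \<rho> z c ^ depth p else 0)"
  using depth_funpow[of c 0] head_funpow[of c 0] by (simp add: geom_vec_def chain_vec_def)

lemma geom_vec_l2:
  assumes "Im z \<noteq> 0" and "decaying z c" and "c \<notin> range \<sigma>"
  shows "geom_vec z c \<in> l2"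
proof -
  have "cmod (\<rho> z c) < 1"
    using cmod_\<rho>_less_1[OF assms(1)] assms(2,3) head_funpow[of c 0] by simp
  then have "summable (\<lambda>j. ((cmod (\<rho> z c))\<^sup>2) ^ j)"
    by (intro summable_geometric) (simp add: abs_square_less_1)
  then show ?thesis
    unfolding geom_vec_def
    by (intro l2_chain_vec) (simp add: norm_power power_mult[symmetric] mult.commute)
qed

lemma geom_vec_in_defect_space:
  assumes z: "Im z \<noteq> 0" and c: "decaying z c" "c \<notin> range \<sigma>"
  shows "geom_vec z c \<in> defect_space D A z"
proof -
  have "\<beta> z c \<noteq> 0"
    using cmod_\<alpha>_less_\<beta>[OF z, of c] c head_funpow[of c 0] by auto
  then have "geom_vec z c q * \<alpha> z q + geom_vec z c (\<sigma> q) * \<beta> z q = 0" for q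
    using \<alpha>_head[of z q] \<beta>_head[of z q]
    by (cases "head q = c") (auto simp: geom_vec_apply[OF c(2)] \<rho>_def field_simps)
  then show ?thesis
    using geom_vec_l2[OF z c] by (simp add: defect_space_iff)
qed

lemma geom_vec_at_head:
  "c \<notin> range \<sigma> \<Longrightarrow> c' \<notin> range \<sigma> \<Longrightarrow> geom_vec z c c' = (if c' = c then 1 else 0)"
  using head_funpow[of c' 0] depth_funpow[of c' 0] by (auto simp: geom_vec_apply)

lemma inj_on_geom_vec: "inj_on (geom_vec z) (- range \<sigma>)"
  by (rule inj_onI) (metis ComplD geom_vec_at_head zero_neq_one)

lemma lin_independent_geom_vec:
  assumes "finite C" and "C \<subseteq> - range \<sigma>"
  shows "lin_independent (geom_vec z ` C)"
  unfolding lin_independent_def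
proof (intro allI impI ballI)
  fix w b
  assume sum0: "(\<Sum>b\<in>geom_vec z ` C. vscale (w b) b) = 0" and "b \<in> geom_vec z ` C"
  then obtain c where c: "c \<in> C" "b = geom_vec z c"
    by auto
  have inj: "inj_on (geom_vec z) C"
    using inj_on_geom_vec assms(2) by (rule inj_on_subset)
  have "0 = (\<Sum>b\<in>geom_vec z ` C. w b * b c)"
    using fun_cong[OF sum0, of c] by (simp add: sum_fun_apply vscale_def)
  also have "\<dots> = (\<Sum>c'\<in>C. w (geom_vec z c') * geom_vec z c' c)"
    by (rule sum.reindex[OF inj, unfolded comp_def])
  also have "\<dots> = (\<Sum>c'\<in>C. if c' = c then w (geom_vec z c') else 0)"
    using assms(2) c(1) by (intro sum.cong) (auto simp: geom_vec_at_head subset_iff)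
  also have "\<dots> = w b"
    using c assms(1) by simp
  finally show "w b = 0"
    by simp
qed

lemma vdim_defect_space_ge:
  assumes z: "Im z \<noteq> 0" and "finite C" and C: "C \<subseteq> {c. c \<notin> range \<sigma> \<and> decaying z c}"
  shows "enat (card C) \<le> vdim (defect_space D A z)"
proof -
  have "C \<subseteq> - range \<sigma>"
    using C by auto
  then have "card (geom_vec z ` C) = card C"
    by (intro card_image inj_on_subset[OF inj_on_geom_vec])
  moreover have "geom_vec z ` C \<subseteq> defect_space D A z"
    using C geom_vec_in_defect_space[OF z] by auto
  ultimately show ?thesis
    using vdim_ge_card[of "geom_vec z ` C"] lin_independent_geom_vec[OF \<open>finite C\<close> \<open>C \<subseteq> - range \<sigma>\<close>]
      \<open>finite C\<close> by simp
qed

lemma defect_space_subset_span: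
  assumes z: "Im z \<noteq> 0" and G: "G = {c. c \<notin> range \<sigma> \<and> decaying z c}" and "finite G"
  shows "defect_space D A z \<subseteq> vs.span (geom_vec z ` G)"
proof
  fix g
  assume g: "g \<in> defect_space D A z"
  have "g = (\<Sum>c\<in>G. vscale (g c) (geom_vec z c))"
  proof
    fix p
    have "(\<Sum>c\<in>G. vscale (g c) (geom_vec z c)) p
        = (\<Sum>c\<in>G. if head p = c then g c * \<rho> z c ^ depth p else 0)"
      unfolding sum_fun_apply vscale_def by (intro sum.cong) (auto simp: G geom_vec_apply)
    also have "\<dots> = g p"
      using \<open>finite G\<close> head_not_in_range[of p] defect_space_expand[OF g z, of p]
      by (simp add: G mult.commute)
    finally show "g p = (\<Sum>c\<in>G. vscale (g c) (geom_vec z c)) p"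
      by simp
  qed
  also have "\<dots> \<in> vs.span (geom_vec z ` G)"
    by (intro vs.span_sum vs.span_scale vs.span_base) auto
  finally show "g \<in> vs.span (geom_vec z ` G)" .
qed

lemma vdim_defect_space:
  assumes z: "Im z \<noteq> 0"
  shows "vdim (defect_space D A z) = ecard {c. c \<notin> range \<sigma> \<and> decaying z c}"
proof (cases "finite {c. c \<notin> range \<sigma> \<and> decaying z c}")
  case True
  define G where "G = {c. c \<notin> range \<sigma> \<and> decaying z c}"
  have "vdim (defect_space D A z) \<le> enat (card G)"
  proof (rule vdim_le)
    fix B
    assume B: "finite B" "B \<subseteq> defect_space D A z" "lin_independent B"
    then have "B \<subseteq> vs.span (geom_vec z ` G)"
      using defect_space_subset_span[OF z G_def] True by (auto simp: G_def)
    then have "card B \<le> card (geom_vec z ` G)"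
      using vs.independent_span_bound[OF _ lin_independent_imp_independent[OF B(1,3)]] True
      by (simp add: G_def)
    also have "\<dots> \<le> card G"
      using True by (simp add: G_def card_image_le)
    finally show "card B \<le> card G" .
  qed
  moreover have "enat (card G) \<le> vdim (defect_space D A z)"
    using True by (intro vdim_defect_space_ge[OF z]) (auto simp: G_def)
  ultimately show ?thesis
    using True by (simp add: ecard_def G_def)
next
  case False
  have "enat n \<le> vdim (defect_space D A z)" for n
    using infinite_arbitrarily_large[OF False] vdim_defect_space_ge[OF z] by metis
  then show ?thesis
    using False by (simp add: ecard_def enat_eq_infinity_if_unbounded)
qed

lemma has_deficiency_index: "has_deficiency_index D A (ecard P) (ecard (- range \<sigma> - P))"
  unfolding has_deficiency_index_def
proof (intro allI impI conjI)
  fix z :: complex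
  assume z: "Im z > 0"
  have "{c. c \<notin> range \<sigma> \<and> decaying z c} = P"
    using z P_disjoint_range by (auto simp: decaying_def)
  then show "vdim (defect_space D A z) = ecard P"
    using vdim_defect_space[of z] z by simp
  have "{c. c \<notin> range \<sigma> \<and> decaying (cnj z) c} = - range \<sigma> - P"
    using z by (auto simp: decaying_def)
  then show "vdim (defect_space D A (cnj z)) = ecard (- range \<sigma> - P)"
    using vdim_defect_space[of "cnj z"] z by simp
qed

end

section \<open>Prescribing the deficiency index\<close>

lemma chain_system_enumerate:
  fixes P Q :: "nat set"
  assumes "P \<inter> Q = {}" and "0 \<in> P \<union> Q" and "infinite (- (P \<union> Q))"
  shows "chain_system (enumerate (- (P \<union> Q))) P"
    and "- range (enumerate (- (P \<union> Q))) - P = Q"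
proof -
  have range: "range (enumerate (- (P \<union> Q))) = - (P \<union> Q)"
    by (rule range_enumerate[OF assms(3)])
  show "chain_system (enumerate (- (P \<union> Q))) P"
  proof
    show "strict_mono (enumerate (- (P \<union> Q)))"
      by (rule strict_mono_enumerate[OF assms(3)])
    show "0 < enumerate (- (P \<union> Q)) 0"
      using range assms(2) by (metis ComplD gr0I rangeI)
    show "P \<inter> range (enumerate (- (P \<union> Q))) = {}"
      using range by auto
  qed
  show "- range (enumerate (- (P \<union> Q))) - P = Q"
    using range assms(1) by auto
qed

lemma ecard_inj_image_enat_less: "inj f \<Longrightarrow> ecard (f ` {i. enat i < k}) = k"
  by (simp add: ecard_image inj_on_subset ecard_enat_less)

lemma infinite_compl_if_even:
  fixes S :: "nat set"
  assumes "S \<subseteq> {p. even p}"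
  shows "infinite (- S)"
proof -
  have "range (\<lambda>i::nat. 2 * i + 1) \<subseteq> - S"
    using assms by auto
  moreover have "infinite (range (\<lambda>i::nat. 2 * i + 1))"
    by (rule range_inj_infinite) (simp add: inj_on_def)
  ultimately show ?thesis
    by (rule infinite_super)
qed

lemma ex_disjoint_with_ecard:
  fixes n m :: enat
  assumes "n + m \<noteq> 0"
  obtains P Q :: "nat set"
  where "P \<inter> Q = {}" "0 \<in> P \<union> Q" "infinite (- (P \<union> Q))" "ecard P = n" "ecard Q = m"
proof -
  show ?thesis
  proof (cases "n = 0")
    case True
    with assms have "enat 0 < m"
      by (simp add: zero_enat_def[symmetric] not_gr_zero)
    show ?thesis
    proof (rule that[of "{}" "(\<lambda>i. 2 * i) ` {i. enat i < m}"])
      show "0 \<in> {} \<union> (\<lambda>i. 2 * i) ` {i. enat i < m}"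
        using \<open>enat 0 < m\<close> by force
      show "infinite (- ({} \<union> (\<lambda>i. 2 * i) ` {i. enat i < m}))"
        by (rule infinite_compl_if_even) auto
      show "ecard {} = n" "ecard ((\<lambda>i. 2 * i) ` {i. enat i < m}) = m"
        using True ecard_inj_image_enat_less[of "\<lambda>i. 2 * i" m]
        by (simp_all add: ecard_def inj_on_def zero_enat_def)
    qed simp
  next
    case False
    then have "enat 0 < n"
      by (simp add: zero_enat_def[symmetric] not_gr_zero)
    show ?thesis
    proof (rule that[of "(\<lambda>i. 4 * i) ` {i. enat i < n}" "(\<lambda>i. 4 * i + 2) ` {i. enat i < m}"])
      show "0 \<in> (\<lambda>i. 4 * i) ` {i. enat i < n} \<union> (\<lambda>i. 4 * i + 2) ` {i. enat i < m}"
        using \<open>enat 0 < n\<close> by force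
      show "(\<lambda>i. 4 * i) ` {i. enat i < n} \<inter> (\<lambda>i. 4 * i + 2) ` {i. enat i < m} = {}"
        by auto presburger
      show "infinite (- ((\<lambda>i. 4 * i) ` {i. enat i < n} \<union> (\<lambda>i. 4 * i + 2) ` {i. enat i < m}))"
        by (rule infinite_compl_if_even) auto
      show "ecard ((\<lambda>i. 4 * i) ` {i. enat i < n}) = n" "ecard ((\<lambda>i. 4 * i + 2) ` {i. enat i < m}) = m"
        using ecard_inj_image_enat_less[of "\<lambda>i. 4 * i" n] ecard_inj_image_enat_less[of "\<lambda>i. 4 * i + 2" m]
        by (simp_all add: inj_on_def)
    qed
  qed
qed

theorem lemma1:
  fixes n m :: enat
  assumes "n + m \<noteq> 0"
  shows "\<exists>D A. lin_operator D A \<and> closed_op D A \<and> symmetric_op D A \<and> inj_on A D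
           \<and> l2_dense D \<and> l2_dense (A ` D) \<and> has_deficiency_index D A n m"
proof -
  obtain P Q :: "nat set" where PQ: "P \<inter> Q = {}" "0 \<in> P \<union> Q" "infinite (- (P \<union> Q))"
    and n: "ecard P = n" and m: "ecard Q = m"
    using ex_disjoint_with_ecard[OF assms] by blast
  interpret chain_system "enumerate (- (P \<union> Q))" P
    by (rule chain_system_enumerate[OF PQ])
  have "has_deficiency_index D A n m"
    using has_deficiency_index chain_system_enumerate(2)[OF PQ] n m by simp
  then show ?thesis
    using lin_operator_A closed_op_A symmetric_op_A inj_on_A l2_dense_D l2_dense_range_A by blast
qed

end
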